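(* Let $L=\bigoplus_{i\in\mathbb{Z}/n\mathbb{Z}}L_i$ be a $(\mathbb{Z}/n\mathbb{Z})$-graded Lie algebra and let $T$ be a homogeneous ideal of $L$ that has only $e$ non-trivial components $T\cap L_i$. Then at most $e^2$ of the components $L_i$ of $L$ do not centralize $T$ (i.e. satisfy $[L_i,T]\neq 0$).
   Context: A $(\mathbb{Z}/n\mathbb{Z})$-graded Lie algebra is $L=\bigoplus_{i=0}^{n-1}L_i$ with $[L_i,L_j]\subseteq L_{i+j \bmod n}$. A subspace $T$ is homogeneous if $T=\bigoplus_i (T\cap L_i)$. *)

theory Defs
  imports Main "HOL.Vector_Spaces"
begin

definition lie_algebra :: "('k::field \<Rightarrow> 'v::ab_group_add \<Rightarrow> 'v) \<Rightarrow> ('v \<Rightarrow> 'v \<Rightarrow> 'v) \<Rightarrow> bool" where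
  "lie_algebra sc br \<longleftrightarrow>
     vector_space sc \<and>
     (\<forall>x y z. br (x + y) z = br x z + br y z) \<and>
     (\<forall>x y z. br x (y + z) = br x y + br x z) \<and>
     (\<forall>a x y. br (sc a x) y = sc a (br x y)) \<and>
     (\<forall>a x y. br x (sc a y) = sc a (br x y)) \<and>
     (\<forall>x. br x x = 0) \<and>
     (\<forall>x y z. br x (br y z) + br y (br z x) + br z (br x y) = 0)"

definition zn_graded :: "('k::field \<Rightarrow> 'v::ab_group_add \<Rightarrow> 'v) \<Rightarrow> ('v \<Rightarrow> 'v \<Rightarrow> 'v) \<Rightarrow> nat \<Rightarrow> (nat \<Rightarrow> 'v set) \<Rightarrow> bool" where
  "zn_graded sc br n Lc \<longleftrightarrow>
     0 < n \<and>
     (\<forall>i<n. module.subspace sc (Lc i)) \<and>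
     (\<forall>v. \<exists>!c. (\<forall>i<n. c i \<in> Lc i) \<and> (\<forall>i\<ge>n. c i = 0) \<and> v = (\<Sum>i<n. c i)) \<and>
     (\<forall>i<n. \<forall>j<n. \<forall>x\<in>Lc i. \<forall>y\<in>Lc j. br x y \<in> Lc ((i + j) mod n))"

definition lie_ideal :: "('k::field \<Rightarrow> 'v::ab_group_add \<Rightarrow> 'v) \<Rightarrow> ('v \<Rightarrow> 'v \<Rightarrow> 'v) \<Rightarrow> 'v set \<Rightarrow> bool" where
  "lie_ideal sc br T \<longleftrightarrow> module.subspace sc T \<and> (\<forall>x. \<forall>t\<in>T. br x t \<in> T)"

definition homogeneous :: "nat \<Rightarrow> (nat \<Rightarrow> 'v::ab_group_add set) \<Rightarrow> 'v set \<Rightarrow> bool" where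
  "homogeneous n Lc T \<longleftrightarrow>
     (\<forall>t\<in>T. \<exists>c. (\<forall>i<n. c i \<in> T \<inter> Lc i) \<and> t = (\<Sum>i<n. c i))"

end

theory Submission
  imports Defs
begin

text \<open>If [x, t] is nonzero with x in L_i and t in T, split t into its homogeneous pieces
  t_j in T \<inter> L_j. Some [x, t_j] is nonzero, and it lies in T \<inter> L_(i+j) because T is an
  ideal. So i = k - j for two indices j, k of the support of T, and a set of e residues
  has at most e^2 differences.\<close>

definition support_indices :: "nat \<Rightarrow> (nat \<Rightarrow> 'v::zero set) \<Rightarrow> 'v set \<Rightarrow> nat set" where
  "support_indices n Lc T = {i. i < n \<and> T \<inter> Lc i \<noteq> {0}}"

lemma mod_shifts_meeting_subset_differences:
  fixes S :: "nat set"
  assumes "S \<subseteq> {..<n}"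
  shows "{i. i < n \<and> (\<exists>j\<in>S. (i + j) mod n \<in> S)} \<subseteq> (\<lambda>(k, j). (k + n - j) mod n) ` (S \<times> S)"
proof
  fix i assume "i \<in> {i. i < n \<and> (\<exists>j\<in>S. (i + j) mod n \<in> S)}"
  then obtain j where i: "i < n" and j: "j \<in> S" and k: "(i + j) mod n \<in> S" by blast
  have "j < n" using j assms by blast
  then have "((i + j) mod n + n - j) mod n = ((i + j) mod n + (n - j)) mod n" by simp
  also have "\<dots> = (i + j + (n - j)) mod n" by (simp add: mod_add_left_eq)
  also have "\<dots> = i" using \<open>j < n\<close> i by simp
  finally show "i \<in> (\<lambda>(k, j). (k + n - j) mod n) ` (S \<times> S)"
    using j k by (intro image_eqI[where x = "((i + j) mod n, j)"]) auto
qed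

lemma card_mod_shifts_meeting_le_square:
  fixes S :: "nat set"
  assumes "S \<subseteq> {..<n}"
  shows "card {i. i < n \<and> (\<exists>j\<in>S. (i + j) mod n \<in> S)} \<le> card S ^ 2"
proof -
  have fin: "finite S" using assms finite_subset by blast
  have "card {i. i < n \<and> (\<exists>j\<in>S. (i + j) mod n \<in> S)}
        \<le> card ((\<lambda>(k, j). (k + n - j) mod n) ` (S \<times> S))"
    using mod_shifts_meeting_subset_differences[OF assms] fin by (intro card_mono) auto
  also have "\<dots> \<le> card (S \<times> S)" using fin by (intro card_image_le) simp
  also have "\<dots> = card S ^ 2" by (simp add: card_cartesian_product power2_eq_square)
  finally show ?thesis .
qed

lemma lie_algebra_bracket_sum_right:
  assumes "lie_algebra sc br"
  shows "br x (\<Sum>j\<in>A. c j) = (\<Sum>j\<in>A. br x (c j))"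
proof -
  have add: "br x (y + z) = br x y + br x z" for y z
    using assms unfolding lie_algebra_def by blast
  have "br x 0 = 0" using add[of 0 0] by simp
  then show ?thesis using sum_comp_morphism[of "br x" c A] add by (simp add: o_def)
qed

lemma lie_algebra_bracket_zero_right:
  assumes "lie_algebra sc br"
  shows "br x 0 = 0"
  using lie_algebra_bracket_sum_right[OF assms, of x _ "{}"] by simp

lemma noncentralizing_component_shifts_support:
  assumes lie: "lie_algebra sc br"
    and graded: "zn_graded sc br n Lc"
    and ideal: "lie_ideal sc br T"
    and homog: "homogeneous n Lc T"
    and i: "i < n" and x: "x \<in> Lc i" and t: "t \<in> T" and nz: "br x t \<noteq> 0"
  shows "\<exists>j\<in>support_indices n Lc T. (i + j) mod n \<in> support_indices n Lc T"
proof -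
  obtain c where c: "\<forall>j<n. c j \<in> T \<inter> Lc j" and t_eq: "t = (\<Sum>j<n. c j)"
    using homog t unfolding homogeneous_def by blast
  have "(\<Sum>j<n. br x (c j)) \<noteq> 0"
    using nz by (simp add: t_eq lie_algebra_bracket_sum_right[OF lie])
  then obtain j where j: "j < n" and nzj: "br x (c j) \<noteq> 0"
    by (meson lessThan_iff sum.neutral)
  have "c j \<noteq> 0" using nzj lie_algebra_bracket_zero_right[OF lie] by auto
  then have "j \<in> support_indices n Lc T"
    using c j unfolding support_indices_def by blast
  moreover have "br x (c j) \<in> T \<inter> Lc ((i + j) mod n)"
    using ideal graded c i j x unfolding lie_ideal_def zn_graded_def by blast
  then have "(i + j) mod n \<in> support_indices n Lc T"
    using nzj j unfolding support_indices_def by auto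
  ultimately show ?thesis by blast
qed

theorem lemma7:
  fixes sc :: "'k::field \<Rightarrow> 'v::ab_group_add \<Rightarrow> 'v"
    and br :: "'v \<Rightarrow> 'v \<Rightarrow> 'v"
    and n :: nat and Lc :: "nat \<Rightarrow> 'v set" and T :: "'v set" and e :: nat
  assumes "lie_algebra sc br"
    and "zn_graded sc br n Lc"
    and "lie_ideal sc br T"
    and "homogeneous n Lc T"
    and "card {i. i < n \<and> T \<inter> Lc i \<noteq> {0}} = e"
  shows "card {i. i < n \<and> (\<exists>x\<in>Lc i. \<exists>t\<in>T. br x t \<noteq> 0)} \<le> e ^ 2"
proof -
  let ?S = "support_indices n Lc T"
  have "{i. i < n \<and> (\<exists>x\<in>Lc i. \<exists>t\<in>T. br x t \<noteq> 0)} \<subseteq> {i. i < n \<and> (\<exists>j\<in>?S. (i + j) mod n \<in> ?S)}"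
    using noncentralizing_component_shifts_support[OF assms(1-4)] by blast
  then have "card {i. i < n \<and> (\<exists>x\<in>Lc i. \<exists>t\<in>T. br x t \<noteq> 0)}
             \<le> card {i. i < n \<and> (\<exists>j\<in>?S. (i + j) mod n \<in> ?S)}"
    by (intro card_mono) auto
  also have "\<dots> \<le> card ?S ^ 2"
    by (rule card_mod_shifts_meeting_le_square) (auto simp: support_indices_def)
  finally show ?thesis using assms(5) by (simp add: support_indices_def)
qed

end
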